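(* Let $p$ be an odd prime. Then $$\sum_{k=0}^{[p/4]}\binom{4k}{2k}\frac1{32^k}\equiv\begin{cases}1\pmod p&\text{if }p\equiv\pm1,\pm3\pmod{16},\\-1\pmod p&\text{if }p\equiv\pm5,\pm7\pmod{16}.\end{cases}$$
   Context: $[x]$ is the greatest integer $\le x$. *)

theory Defs
  imports Complex_Main "HOL-Computational_Algebra.Primes"
begin

text \<open>Congruence of rational numbers modulo an integer p: q and r are congruent
  mod p if q - r = a / b with integers a, b, where p divides a and p does not divide b
  (i.e. the difference is a p-adic integer divisible by p).\<close>
definition rat_cong :: "rat \<Rightarrow> rat \<Rightarrow> int \<Rightarrow> bool" where
  "rat_cong q r p \<longleftrightarrow> (\<exists>a b::int. b \<noteq> 0 \<and> \<not> p dvd b \<and> p dvd a \<and> q - r = of_int a / of_int b)"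

end

theory Submission
  imports Defs "HOL-Computational_Algebra.Polynomial" "HOL-Number_Theory.Cong"
begin

(* With h = (p - 1) / 2 one has C(2n, n) \<equiv> (-4)^n C(h, n) (mod p), so the sum is congruent to
   2^-h \<Sum>\<^sub>k C(h, 2k) 2^(h-k) = 2^-h ((2 + \<surd>2)^h + (2 - \<surd>2)^h) / 2.
   Compute in \<int>[\<zeta>]/(p) for a primitive 16th root of unity \<zeta>, i.e. in \<int>[X] modulo p and X^8 + 1:
   there \<surd>2 = \<zeta>^2 + \<zeta>^-2, and 2 + \<surd>2 = c^2, 2 - \<surd>2 = d^2 with c = \<zeta> + \<zeta>^-1, d = \<zeta>^3 + \<zeta>^-3.
   The Frobenius x \<mapsto> x^p sends c, d to \<plusminus>c, \<plusminus>d according to p mod 16, which determines both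
   c^(p-1) + d^(p-1) = (2 + \<surd>2)^h + (2 - \<surd>2)^h and 2^h = (2/p) modulo p. *)

section \<open>Congruence modulo an integer and a polynomial\<close>

definition poly_cong :: "int \<Rightarrow> int poly \<Rightarrow> int poly \<Rightarrow> int poly \<Rightarrow> bool"
  where "poly_cong P M a b \<longleftrightarrow> (\<exists>u v. a - b = smult P u + M * v)"

abbreviation poly_cong_notation :: "int poly \<Rightarrow> int poly \<Rightarrow> int \<Rightarrow> int poly \<Rightarrow> bool"
    (\<open>(\<open>indent=1 notation=\<open>mixfix poly_cong\<close>\<close>[_ = _] '(' mod _, _'))\<close>)
  where "[a = b] (mod P, M) \<equiv> poly_cong P M a b"

lemma poly_cong_refl [simp]: "[a = a] (mod P, M)"
  unfolding poly_cong_def by (rule exI[of _ 0], rule exI[of _ 0]) simp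

lemma poly_cong_sym: "[a = b] (mod P, M) \<Longrightarrow> [b = a] (mod P, M)"
  unfolding poly_cong_def by (metis minus_diff_eq mult_minus_right smult_minus_right minus_add_distrib)

lemma poly_cong_add:
  assumes "[a = b] (mod P, M)" and "[c = d] (mod P, M)"
  shows "[a + c = b + d] (mod P, M)"
proof -
  obtain u v u' v' where "a - b = smult P u + M * v" and "c - d = smult P u' + M * v'"
    using assms unfolding poly_cong_def by blast
  then have "a + c - (b + d) = smult P (u + u') + M * (v + v')"
    by (simp add: algebra_simps smult_add_right)
  then show ?thesis
    unfolding poly_cong_def by blast
qed

lemma poly_cong_trans [trans]:
  "[a = b] (mod P, M) \<Longrightarrow> [b = c] (mod P, M) \<Longrightarrow> [a = c] (mod P, M)"
  using poly_cong_add[of P M a b b c] unfolding poly_cong_def by simp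

lemma poly_cong_mult:
  assumes "[a = b] (mod P, M)" and "[c = d] (mod P, M)"
  shows "[a * c = b * d] (mod P, M)"
proof -
  obtain u v u' v' where uv: "a - b = smult P u + M * v" and uv': "c - d = smult P u' + M * v'"
    using assms unfolding poly_cong_def by blast
  have "a * c - b * d = a * (c - d) + (a - b) * d"
    by (simp add: algebra_simps)
  also have "\<dots> = smult P (a * u' + u * d) + M * (a * v' + v * d)"
    unfolding uv uv' by (simp add: algebra_simps smult_add_right)
  finally show ?thesis
    unfolding poly_cong_def by blast
qed

lemma poly_cong_minus: "[a = b] (mod P, M) \<Longrightarrow> [- a = - b] (mod P, M)"
  using poly_cong_mult[OF poly_cong_refl[where a = "- 1"]] by simp

lemma poly_cong_diff:
  "[a = b] (mod P, M) \<Longrightarrow> [c = d] (mod P, M) \<Longrightarrow> [a - c = b - d] (mod P, M)"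
  using poly_cong_add[OF _ poly_cong_minus] by simp

lemma poly_cong_power: "[a = b] (mod P, M) \<Longrightarrow> [a ^ n = b ^ n] (mod P, M)"
  by (induction n) (auto intro: poly_cong_mult)

lemma poly_cong_sum:
  "(\<And>x. x \<in> A \<Longrightarrow> [f x = g x] (mod P, M)) \<Longrightarrow> [sum f A = sum g A] (mod P, M)"
  by (induction A rule: infinite_finite_induct) (auto intro: poly_cong_add)

lemma poly_cong_smult_0: "[smult P u = 0] (mod P, M)"
  unfolding poly_cong_def by (metis add.right_neutral diff_zero mult_zero_right)

lemma poly_cong_of_multiple: "a - b = M * w \<Longrightarrow> [a = b] (mod P, M)"
  unfolding poly_cong_def by (metis add_0 smult_0_right)

lemma poly_cong_of_int:
  assumes "lead_coeff M = 1" and "degree M > 0"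
    and "[of_int a = of_int b] (mod P, M)"
  shows "[a = b] (mod P)"
proof -
  obtain u v where uv: "of_int a - of_int b = smult P u + M * v"
    using assms(3) unfolding poly_cong_def by blast
  have "M \<noteq> 0"
    using assms(2) by auto
  obtain q r where "pseudo_divmod u M = (q, r)"
    by fastforce
  with pseudo_divmod[OF \<open>M \<noteq> 0\<close> this] assms(1)
  have u: "u = M * q + r" and r: "r = 0 \<or> degree r < degree M"
    by auto
  have eq: "[:a - b:] - smult P r = M * (v + smult P q)"
    using uv u by (simp add: of_int_poly algebra_simps smult_add_right)
  have "degree ([:a - b:] - smult P r) < degree M"
    using r assms(2) by (auto intro: le_less_trans[OF degree_diff_le])
  then have "v + smult P q = 0"
    using eq \<open>M \<noteq> 0\<close> by (metis add.right_neutral degree_mult_eq leD le_add1)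
  then have "a - b = P * coeff r 0"
    using eq by (metis coeff_pCons_0 coeff_smult diff_eq_eq mult_zero_right add_0)
  then show ?thesis
    by (simp add: cong_iff_dvd_diff)
qed

lemma poly_cong_add_power_prime:
  assumes "prime p"
  shows "[(a + b) ^ p = a ^ p + b ^ p] (mod int p, M)"
proof -
  have "(a + b) ^ p = (\<Sum>k\<le>p. of_nat (p choose k) * a ^ k * b ^ (p - k))"
    by (rule binomial_ring)
  also have "[\<dots> = (\<Sum>k\<le>p. if k = p then a ^ p else if k = 0 then b ^ p else 0)] (mod int p, M)"
  proof (rule poly_cong_sum)
    fix k assume "k \<in> {..p}"
    show "[of_nat (p choose k) * a ^ k * b ^ (p - k)
        = (if k = p then a ^ p else if k = 0 then b ^ p else 0)] (mod int p, M)"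
    proof (cases "k = p \<or> k = 0")
      case False
      with \<open>k \<in> {..p}\<close> have "p dvd p choose k"
        using assms by (intro dvd_choose_prime) auto
      then obtain j where "p choose k = p * j" ..
      then have "of_nat (p choose k) * a ^ k * b ^ (p - k) = smult (int p) (of_nat j * a ^ k * b ^ (p - k))"
        by (simp add: of_nat_poly mult.assoc)
      then show ?thesis
        using False poly_cong_smult_0 by simp
    qed auto
  qed
  also have "(\<Sum>k\<le>p. if k = p then a ^ p else if k = 0 then b ^ p else 0) = a ^ p + b ^ p"
    using prime_gt_0_nat[OF assms] by (simp add: sum.If_cases Int_absorb1)
  finally show ?thesis .
qed

section \<open>Binomial coefficients and integer congruences\<close>

lemma binomial_even_part:
  fixes a s :: "'a::comm_ring_1"
  shows "(a + s) ^ n + (a - s) ^ n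
    = 2 * (\<Sum>k\<le>n div 2. of_nat (n choose (2 * k)) * a ^ (n - 2 * k) * s ^ (2 * k))"
proof -
  define g where "g j = of_nat (n choose j) * a ^ (n - j) * (s ^ j + (- s) ^ j)" for j
  have "(a + s) ^ n + (a - s) ^ n = (\<Sum>j\<le>n. g j)"
    unfolding binomial_ring[of s a n, unfolded add.commute[of s]]
      binomial_ring[of "- s" a n, unfolded add.commute[of "- s"] diff_conv_add_uminus[symmetric]]
    by (simp add: g_def sum.distrib[symmetric] algebra_simps)
  also have "\<dots> = (\<Sum>j\<le>Suc (2 * (n div 2)). g j)"
    by (rule sum.mono_neutral_left) (auto simp: g_def binomial_eq_0)
  also have "\<dots> = (\<Sum>k\<le>n div 2. g (2 * k) + g (Suc (2 * k)))"
    by (rule sum.in_pairs_0)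
  also have "\<dots> = 2 * (\<Sum>k\<le>n div 2. of_nat (n choose (2 * k)) * a ^ (n - 2 * k) * s ^ (2 * k))"
    by (simp add: g_def sum_distrib_left algebra_simps)
  finally show ?thesis .
qed

lemma Suc_times_central_binomial:
  "Suc n * ((2 * Suc n) choose Suc n) = 2 * (2 * n + 1) * ((2 * n) choose n)"
proof -
  have "Suc n * (Suc n * (Suc (Suc (2 * n)) choose Suc n))
      = Suc (Suc (2 * n)) * (Suc n * (Suc (2 * n) choose n))"
    by (simp only: Suc_times_binomial mult.left_commute)
  also have "Suc (2 * n) choose n = Suc (2 * n) choose Suc n"
    using binomial_symmetric[of n "Suc (2 * n)"] by (simp add: Suc_diff_le)
  also have "Suc n * (Suc (2 * n) choose Suc n) = Suc (2 * n) * ((2 * n) choose n)"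
    by (rule Suc_times_binomial)
  also have "Suc (Suc (2 * n)) * (Suc (2 * n) * ((2 * n) choose n))
      = Suc n * (2 * (2 * n + 1) * ((2 * n) choose n))"
    by (simp add: algebra_simps)
  finally have "Suc n * (Suc (Suc (2 * n)) choose Suc n) = 2 * (2 * n + 1) * ((2 * n) choose n)"
    by (subst (asm) mult_left_cancel) simp_all
  moreover have "2 * Suc n = Suc (Suc (2 * n))"
    by simp
  ultimately show ?thesis
    by (simp only:)
qed

lemma central_binomial_minus_binomial_Suc:
  assumes "n < h"
  shows "int (Suc n) * (int ((2 * Suc n) choose Suc n) - (- 4) ^ Suc n * int (h choose Suc n))
    = 2 * (2 * int n + 1) * (int ((2 * n) choose n) - (- 4) ^ n * int (h choose n))
      + 2 * (2 * int h + 1) * ((- 4) ^ n * int (h choose n))"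
proof -
  have "Suc n * (h choose Suc n) = (h - n) * (h choose n)"
    by (simp only: binomial_absorption binomial_absorb_comp)
  then have "int (Suc n) * int (h choose Suc n) = int (h - n) * int (h choose n)"
    by (simp only: of_nat_mult[symmetric])
  then have e2: "int (Suc n) * int (h choose Suc n) = (int h - int n) * int (h choose n)"
    using assms by (simp add: of_nat_diff)
  have e1: "int (Suc n) * int ((2 * Suc n) choose Suc n) = 2 * (2 * int n + 1) * int ((2 * n) choose n)"
    using arg_cong[OF Suc_times_central_binomial[of n], of int]
    by (simp only: of_nat_mult of_nat_add of_nat_numeral of_nat_1)
  have "int (Suc n) * (int ((2 * Suc n) choose Suc n) - (- 4) ^ Suc n * int (h choose Suc n))
      = int (Suc n) * int ((2 * Suc n) choose Suc n) - (- 4) ^ Suc n * (int (Suc n) * int (h choose Suc n))"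
    by (simp add: algebra_simps)
  also have "\<dots> = 2 * (2 * int n + 1) * int ((2 * n) choose n) - (- 4) ^ Suc n * ((int h - int n) * int (h choose n))"
    by (simp only: e1 e2)
  finally show ?thesis
    by (simp add: algebra_simps)
qed

lemma central_binomial_cong:
  assumes "prime p" and "p = 2 * h + 1" and "n \<le> h"
  shows "[int ((2 * n) choose n) = (- 4) ^ n * int (h choose n)] (mod int p)"
  using assms(3)
proof (induction n)
  case 0
  then show ?case by simp
next
  case (Suc n)
  define D where "D n = int ((2 * n) choose n) - (- 4) ^ n * int (h choose n)" for n
  have step: "int (Suc n) * D (Suc n) = 2 * (2 * int n + 1) * D n + 2 * int p * ((- 4) ^ n * int (h choose n))"
    using central_binomial_minus_binomial_Suc[of n h] Suc.prems unfolding D_def assms(2) by simp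
  have "int p dvd D n"
    using Suc by (simp add: D_def cong_iff_dvd_diff)
  then have "int p dvd 2 * (2 * int n + 1) * D n"
    by (rule dvd_mult)
  moreover have "int p dvd 2 * int p * ((- 4) ^ n * int (h choose n))"
    by simp
  ultimately have "int p dvd int (Suc n) * D (Suc n)"
    unfolding step by (rule dvd_add)
  then have "[int (Suc n) * D (Suc n) = int (Suc n) * 0] (mod int p)"
    by (simp add: cong_iff_dvd_diff)
  moreover have "coprime (int (Suc n)) (int p)"
  proof -
    have "\<not> p dvd Suc n"
      using Suc.prems assms(2) by (auto dest: dvd_imp_le)
    then have "coprime (Suc n) p"
      using prime_imp_coprime[OF assms(1)] coprime_commute by blast
    then show ?thesis
      by (simp only: coprime_int_iff)
  qed
  ultimately have "[D (Suc n) = 0] (mod int p)"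
    using cong_mult_lcancel by blast
  then show ?case
    by (simp only: D_def cong_iff_dvd_diff diff_zero)
qed

lemma odd_prime_not_dvd_power_2:
  assumes "prime p" and "odd p"
  shows "\<not> int p dvd 2 ^ n"
proof
  assume "int p dvd 2 ^ n"
  moreover have "coprime (int p) (2 ^ n)"
    using assms(2) by simp
  ultimately have "is_unit (int p)"
    using coprime_absorb_left by blast
  then show False
    using assms(1) not_prime_unit by auto
qed

lemma rat_cong_of_cong:
  assumes "[a = e * b] (mod P)" and "\<not> P dvd b"
  shows "rat_cong (of_int a / of_int b) (of_int e) P"
proof -
  have "b \<noteq> 0"
    using assms(2) by auto
  then have "of_int a / of_int b - of_int e = (of_int (a - e * b) / of_int b :: rat)"
    by (simp add: field_simps)
  moreover have "P dvd a - e * b"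
    using assms(1) by (simp add: cong_iff_dvd_diff)
  ultimately show ?thesis
    unfolding rat_cong_def using \<open>b \<noteq> 0\<close> assms(2) by blast
qed

lemma cong_min_mod_or_neg:
  fixes p n :: nat
  assumes "n > 0"
  shows "[p = min (p mod n) (n - p mod n)] (mod n) \<or> [p + min (p mod n) (n - p mod n) = 0] (mod n)"
proof (cases "p mod n \<le> n - p mod n")
  case True
  then show ?thesis
    by (simp add: cong_def)
next
  case False
  have "p mod n < n"
    using assms by simp
  then have "p + (n - p mod n) = n * (p div n) + n"
    using mult_div_mod_eq[of n p] by arith
  with False show ?thesis
    by (simp add: cong_def)
qed

section \<open>Sixteenth roots of unity modulo p\<close>

abbreviation X :: "int poly" where "X \<equiv> [:0, 1:]"

definition cyclotomic16 :: "int poly" where "cyclotomic16 = X ^ 8 + 1"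

(* Modulo X^8 + 1, X is a primitive 16th root of unity \<zeta> and two_cos n is \<zeta>^n + \<zeta>^-n = 2 cos (n\<pi>/8). *)
definition two_cos :: "nat \<Rightarrow> int poly" where "two_cos n = X ^ n + X ^ (15 * n)"

lemma cyclotomic16_monom: "cyclotomic16 = monom 1 8 + 1"
  unfolding cyclotomic16_def by (simp add: monom_altdef)

lemma degree_cyclotomic16: "degree cyclotomic16 = 8"
  unfolding cyclotomic16_monom by (simp add: degree_add_eq_left degree_monom_eq)

lemma lead_coeff_cyclotomic16: "lead_coeff cyclotomic16 = 1"
  unfolding degree_cyclotomic16 by (simp add: cyclotomic16_monom)

lemma X_pow_8: "[X ^ 8 = - 1] (mod P, cyclotomic16)"
  by (rule poly_cong_of_multiple[where w = 1]) (simp add: cyclotomic16_def)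

lemma X_pow_add_8: "[X ^ (n + 8) = - (X ^ n)] (mod P, cyclotomic16)"
  using poly_cong_mult[OF poly_cong_refl[where a = "X ^ n"] X_pow_8] by (simp add: power_add)

lemma X_pow_cong:
  assumes "[m = n] (mod 16)"
  shows "[X ^ m = X ^ n] (mod P, cyclotomic16)"
proof -
  have X16: "[X ^ 16 = 1] (mod P, cyclotomic16)"
    using poly_cong_power[OF X_pow_8, where n = 2] by (simp flip: power_mult)
  have reduce: "[X ^ k = X ^ (k mod 16)] (mod P, cyclotomic16)" for k
  proof -
    have "X ^ k = (X ^ 16) ^ (k div 16) * X ^ (k mod 16)"
      by (simp flip: power_mult power_add)
    also have "[\<dots> = 1 ^ (k div 16) * X ^ (k mod 16)] (mod P, cyclotomic16)"
      by (intro poly_cong_mult poly_cong_power X16 poly_cong_refl)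
    finally show ?thesis by simp
  qed
  from reduce[of m] assms have "[X ^ m = X ^ (n mod 16)] (mod P, cyclotomic16)"
    by (simp add: cong_def)
  then show ?thesis
    using poly_cong_sym[OF reduce[of n]] by (rule poly_cong_trans)
qed

lemma two_cos_0: "two_cos 0 = 2"
  by (simp add: two_cos_def)

lemma two_cos_add_8: "[two_cos (n + 8) = - two_cos n] (mod P, cyclotomic16)"
proof -
  have "two_cos (n + 8) = X ^ (n + 8) + X ^ ((15 * n + 16 * 7) + 8)"
    by (simp add: two_cos_def algebra_simps)
  also have "[\<dots> = - (X ^ n) + - (X ^ (15 * n + 16 * 7))] (mod P, cyclotomic16)"
    by (intro poly_cong_add X_pow_add_8)
  also have "[- (X ^ n) + - (X ^ (15 * n + 16 * 7)) = - (X ^ n) + - (X ^ (15 * n))] (mod P, cyclotomic16)"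
    by (intro poly_cong_add poly_cong_minus poly_cong_refl X_pow_cong) (simp only: cong_def mod_mult_self2)
  finally show ?thesis
    by (simp add: two_cos_def)
qed

lemma two_cos_cong:
  assumes "[m = n] (mod 16) \<or> [m + n = 0] (mod 16)"
  shows "[two_cos m = two_cos n] (mod P, cyclotomic16)"
  using assms
proof
  assume "[m = n] (mod 16)"
  then show ?thesis
    unfolding two_cos_def by (intro poly_cong_add X_pow_cong cong_scalar_left)
next
  assume mn: "[m + n = 0] (mod 16)"
  have "[15 * n + (m + n) = 15 * n + 0] (mod 16)" "[15 * m + (m + n) = 15 * m + 0] (mod 16)"
    by (rule cong_add[OF cong_refl mn])+
  moreover have "15 * n + (m + n) = m + 16 * n" "15 * m + (m + n) = n + 16 * m"
    by simp_all
  ultimately have "[m = 15 * n] (mod 16)" "[15 * m = n] (mod 16)"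
    by (simp_all add: cong_def)
  then have "[X ^ m = X ^ (15 * n)] (mod P, cyclotomic16)"
      "[X ^ (15 * m) = X ^ n] (mod P, cyclotomic16)"
    by (auto intro: X_pow_cong)
  then have "[X ^ m + X ^ (15 * m) = X ^ (15 * n) + X ^ n] (mod P, cyclotomic16)"
    by (rule poly_cong_add)
  then show ?thesis
    unfolding two_cos_def by (simp add: add.commute)
qed

lemma two_cos_mult_cong:
  assumes "[p = r] (mod 16) \<or> [p + r = 0] (mod 16)"
  shows "[two_cos (p * n) = two_cos (r * n)] (mod P, cyclotomic16)"
  using assms
proof (elim disjE)
  assume "[p = r] (mod 16)"
  then show ?thesis
    by (intro two_cos_cong disjI1 cong_scalar_right)
next
  assume "[p + r = 0] (mod 16)"
  then have "[(p + r) * n = 0 * n] (mod 16)"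
    by (rule cong_scalar_right)
  then show ?thesis
    by (intro two_cos_cong disjI2) (simp add: distrib_right)
qed

lemma two_cos_antipodal:
  assumes "[m = n + 8] (mod 16) \<or> [m + n = 8] (mod 16)"
  shows "[two_cos m = - two_cos n] (mod P, cyclotomic16)"
proof -
  have "[m = n + 8] (mod 16) \<or> [m + (n + 8) = 0] (mod 16)"
    using assms
  proof (elim disjE)
    assume "[m + n = 8] (mod 16)"
    then have "[m + n + 8 = 8 + 8] (mod 16)"
      by (intro cong_add cong_refl)
    then show ?thesis
      by (simp add: cong_def add.assoc)
  qed simp
  then have "[two_cos m = two_cos (n + 8)] (mod P, cyclotomic16)"
    by (rule two_cos_cong)
  then show ?thesis
    using two_cos_add_8 by (rule poly_cong_trans)
qed

lemma two_cos_4: "[two_cos 4 = 0] (mod P, cyclotomic16)"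
proof -
  have "two_cos 4 = X ^ 4 + X ^ (52 + 8)"
    by (simp add: two_cos_def)
  also have "[\<dots> = X ^ 4 + - (X ^ 52)] (mod P, cyclotomic16)"
    by (intro poly_cong_add poly_cong_refl X_pow_add_8)
  also have "[\<dots> = X ^ 4 + - (X ^ 4)] (mod P, cyclotomic16)"
    by (intro poly_cong_add poly_cong_minus poly_cong_refl X_pow_cong) (simp add: cong_def)
  finally show ?thesis by simp
qed

lemma two_cos_mult:
  assumes "n \<le> m"
  shows "[two_cos m * two_cos n = two_cos (m + n) + two_cos (m - n)] (mod P, cyclotomic16)"
proof -
  have "two_cos m * two_cos n
      = (X ^ (m + n) + X ^ (15 * (m + n))) + (X ^ (m + 15 * n) + X ^ (15 * m + n))"
    unfolding two_cos_def by (simp add: distrib_left distrib_right mult.commute add.commute flip: power_add)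
  also have "[\<dots> = (X ^ (m + n) + X ^ (15 * (m + n))) + (X ^ (m - n) + X ^ (15 * (m - n)))]
      (mod P, cyclotomic16)"
  proof (intro poly_cong_add poly_cong_refl X_pow_cong)
    have "m + 15 * n = (m - n) + 16 * n"
      using assms by simp
    then show "[m + 15 * n = m - n] (mod 16)"
      by (simp only: cong_def mod_mult_self2)
    have "15 * m + n = 15 * (m - n) + 16 * n"
      using assms by (simp add: diff_mult_distrib2)
    then show "[15 * m + n = 15 * (m - n)] (mod 16)"
      by (simp only: cong_def mod_mult_self2)
  qed
  finally show ?thesis
    by (simp add: two_cos_def)
qed

lemma two_cos_power_prime:
  assumes "prime p"
  shows "[two_cos n ^ p = two_cos (p * n)] (mod int p, M)"
  using poly_cong_add_power_prime[OF assms, where a = "X ^ n" and b = "X ^ (15 * n)" and M = M]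
  by (simp add: two_cos_def mult.commute mult.left_commute mult.assoc flip: power_mult)

lemma two_cos_1_sq: "[two_cos 1 ^ 2 = 2 + two_cos 2] (mod P, cyclotomic16)"
  using two_cos_mult[of 1 1 P] by (simp add: power2_eq_square two_cos_0 add.commute eval_nat_numeral)

lemma two_cos_3_sq: "[two_cos 3 ^ 2 = 2 - two_cos 2] (mod P, cyclotomic16)"
proof -
  have "[two_cos 3 ^ 2 = two_cos 6 + two_cos 0] (mod P, cyclotomic16)"
    using two_cos_mult[of 3 3 P] by (simp add: power2_eq_square)
  also have "[\<dots> = - two_cos 2 + 2] (mod P, cyclotomic16)"
    by (intro poly_cong_add two_cos_antipodal) (simp_all add: two_cos_0 cong_def)
  finally show ?thesis by simp
qed

lemma two_cos_2_sq: "[two_cos 2 ^ 2 = 2] (mod P, cyclotomic16)"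
proof -
  have "[two_cos 2 ^ 2 = two_cos 4 + two_cos 0] (mod P, cyclotomic16)"
    using two_cos_mult[of 2 2 P] by (simp add: power2_eq_square)
  also have "[\<dots> = 0 + 2] (mod P, cyclotomic16)"
    by (intro poly_cong_add two_cos_4) (simp add: two_cos_0)
  finally show ?thesis by simp
qed

lemma two_cos_1_3: "[two_cos 1 * two_cos 3 = two_cos 2] (mod P, cyclotomic16)"
proof -
  have "[two_cos 1 * two_cos 3 = two_cos 4 + two_cos 2] (mod P, cyclotomic16)"
    using two_cos_mult[of 1 3 P] by (simp add: mult.commute)
  also have "[\<dots> = 0 + two_cos 2] (mod P, cyclotomic16)"
    by (intro poly_cong_add two_cos_4 poly_cong_refl)
  finally show ?thesis by simp
qed

lemma two_cos_3_1_double: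
  "[two_cos 3 * two_cos 1 + two_cos 1 * two_cos 3 = 2 * two_cos 2] (mod P, cyclotomic16)"
proof -
  have "two_cos 3 * two_cos 1 + two_cos 1 * two_cos 3 = 2 * (two_cos 1 * two_cos 3)"
    by algebra
  also have "[\<dots> = 2 * two_cos 2] (mod P, cyclotomic16)"
    by (intro poly_cong_mult poly_cong_refl two_cos_1_3)
  finally show ?thesis .
qed

lemma two_cos_3_sq_minus_1_sq:
  "[two_cos 3 * two_cos 3 - two_cos 1 * two_cos 1 = - 2 * two_cos 2] (mod P, cyclotomic16)"
  using poly_cong_diff[OF two_cos_3_sq two_cos_1_sq, of P] by (simp add: power2_eq_square)

section \<open>Evaluating the sum\<close>

lemma cyclotomic16_cong_of_int:
  "[of_int a = of_int b] (mod P, cyclotomic16) \<Longrightarrow> [a = b] (mod P)"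
  by (rule poly_cong_of_int[OF lead_coeff_cyclotomic16]) (simp_all add: degree_cyclotomic16)

lemma two_pow_half_cong:
  assumes "prime p" and "p = 2 * h + 1"
    and "[two_cos (p * 2) = of_int \<chi> * two_cos 2] (mod int p, cyclotomic16)"
  shows "[2 ^ h = \<chi>] (mod int p)"
proof -
  let ?s = "two_cos 2"
  have "of_int (2 * 2 ^ h) = (2 :: int poly) ^ (h + 1)"
    by simp
  also have "[\<dots> = (?s ^ 2) ^ (h + 1)] (mod int p, cyclotomic16)"
    by (rule poly_cong_sym[OF poly_cong_power[OF two_cos_2_sq]])
  also have "(?s ^ 2) ^ (h + 1) = ?s * ?s ^ p"
    by (simp add: assms(2) flip: power_mult power_Suc)
  also have "[\<dots> = ?s * (of_int \<chi> * ?s)] (mod int p, cyclotomic16)"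
    using two_cos_power_prime[OF assms(1), where n = 2] assms(3)
    by (intro poly_cong_mult poly_cong_refl) (rule poly_cong_trans)
  also have "?s * (of_int \<chi> * ?s) = of_int \<chi> * ?s ^ 2"
    by (simp add: power2_eq_square)
  also have "[\<dots> = of_int \<chi> * 2] (mod int p, cyclotomic16)"
    by (intro poly_cong_mult poly_cong_refl two_cos_2_sq)
  also have "of_int \<chi> * 2 = (of_int (2 * \<chi>) :: int poly)"
    by simp
  finally have "[2 * 2 ^ h = 2 * \<chi>] (mod int p)"
    by (rule cyclotomic16_cong_of_int)
  moreover have "coprime 2 (int p)"
    using assms(2) by simp
  ultimately show ?thesis
    using cong_mult_lcancel by blast
qed

lemma sqrt2_binomial_sum_cong:
  "[(2 + two_cos 2) ^ h + (2 - two_cos 2) ^ h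
    = of_int (2 * (\<Sum>k\<le>h div 2. int (h choose (2 * k)) * 2 ^ (h - k)))] (mod P, cyclotomic16)"
proof -
  let ?s = "two_cos 2"
  have "[(\<Sum>k\<le>h div 2. of_nat (h choose (2 * k)) * 2 ^ (h - 2 * k) * ?s ^ (2 * k))
      = (\<Sum>k\<le>h div 2. of_nat (h choose (2 * k)) * 2 ^ (h - 2 * k) * 2 ^ k)] (mod P, cyclotomic16)"
    by (intro poly_cong_sum poly_cong_mult poly_cong_refl)
      (simp add: power_mult poly_cong_power two_cos_2_sq)
  also have "(\<Sum>k\<le>h div 2. of_nat (h choose (2 * k)) * 2 ^ (h - 2 * k) * 2 ^ k)
      = (of_int (\<Sum>k\<le>h div 2. int (h choose (2 * k)) * 2 ^ (h - k)) :: int poly)"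
    unfolding of_int_sum
  proof (rule sum.cong[OF refl])
    fix k assume "k \<in> {..h div 2}"
    then have "h - 2 * k + k = h - k"
      by auto
    then show "of_nat (h choose (2 * k)) * 2 ^ (h - 2 * k) * 2 ^ k
        = (of_int (int (h choose (2 * k)) * 2 ^ (h - k)) :: int poly)"
      by (simp add: mult.assoc flip: power_add)
  qed
  finally show ?thesis
    unfolding binomial_even_part of_int_mult of_int_numeral by (intro poly_cong_mult poly_cong_refl)
qed

(* c^(2h) = c^p / c with 1/c = d \<surd>2 / 2 *)
lemma two_cos_1_3_even_powers:
  assumes "p = 2 * h + 1"
  shows "[2 * (two_cos 1 ^ (2 * h) + two_cos 3 ^ (2 * h))
    = two_cos 2 * (two_cos 3 * two_cos 1 ^ p + two_cos 1 * two_cos 3 ^ p)] (mod P, cyclotomic16)"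
proof -
  let ?c = "two_cos 1" and ?d = "two_cos 3" and ?s = "two_cos 2"
  have "[2 * (?c ^ (2 * h) + ?d ^ (2 * h)) = ?s * ?s * (?c ^ (2 * h) + ?d ^ (2 * h))] (mod P, cyclotomic16)"
    using poly_cong_sym[OF two_cos_2_sq] by (intro poly_cong_mult poly_cong_refl) (simp add: power2_eq_square)
  also have "[?s * ?s * (?c ^ (2 * h) + ?d ^ (2 * h)) = ?s * (?c * ?d) * (?c ^ (2 * h) + ?d ^ (2 * h))]
      (mod P, cyclotomic16)"
    by (intro poly_cong_mult poly_cong_refl poly_cong_sym[OF two_cos_1_3])
  also have "?s * (?c * ?d) * (?c ^ (2 * h) + ?d ^ (2 * h)) = ?s * (?d * ?c ^ p + ?c * ?d ^ p)"
    by (simp add: assms algebra_simps)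
  finally show ?thesis .
qed

lemma even_binomial_sum_cong:
  assumes "prime p" and "p = 2 * h + 1"
    and "[two_cos 3 * two_cos p + two_cos 1 * two_cos (p * 3) = of_int (2 * \<eta>) * two_cos 2]
      (mod int p, cyclotomic16)"
  shows "[(\<Sum>k\<le>h div 2. int (h choose (2 * k)) * 2 ^ (h - k)) = \<eta>] (mod int p)"
proof -
  let ?c = "two_cos 1" and ?d = "two_cos 3" and ?s = "two_cos 2"
  define A where "A = (\<Sum>k\<le>h div 2. int (h choose (2 * k)) * 2 ^ (h - k))"
  have frobenius: "[?c ^ p = two_cos p] (mod int p, cyclotomic16)"
      "[?d ^ p = two_cos (p * 3)] (mod int p, cyclotomic16)"
    using two_cos_power_prime[OF assms(1), where n = 1] two_cos_power_prime[OF assms(1), where n = 3]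
    by simp_all
  have "of_int (4 * A) = 2 * (of_int (2 * A) :: int poly)"
    by simp
  also have "[\<dots> = 2 * ((2 + ?s) ^ h + (2 - ?s) ^ h)] (mod int p, cyclotomic16)"
    unfolding A_def by (intro poly_cong_mult poly_cong_refl poly_cong_sym[OF sqrt2_binomial_sum_cong])
  also have "[\<dots> = 2 * (?c ^ (2 * h) + ?d ^ (2 * h))] (mod int p, cyclotomic16)"
    unfolding power_mult
    by (intro poly_cong_mult poly_cong_add poly_cong_power poly_cong_refl poly_cong_sym[OF two_cos_1_sq]
        poly_cong_sym[OF two_cos_3_sq])
  also have "[\<dots> = ?s * (?d * ?c ^ p + ?c * ?d ^ p)] (mod int p, cyclotomic16)"
    by (rule two_cos_1_3_even_powers[OF assms(2)])
  also have "[\<dots> = ?s * (?d * two_cos p + ?c * two_cos (p * 3))] (mod int p, cyclotomic16)"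
    by (intro poly_cong_mult poly_cong_add poly_cong_refl frobenius)
  also have "[\<dots> = ?s * (of_int (2 * \<eta>) * ?s)] (mod int p, cyclotomic16)"
    by (intro poly_cong_mult poly_cong_refl assms(3))
  also have "?s * (of_int (2 * \<eta>) * ?s) = of_int (2 * \<eta>) * ?s ^ 2"
    by (simp add: power2_eq_square)
  also have "[\<dots> = of_int (2 * \<eta>) * 2] (mod int p, cyclotomic16)"
    by (intro poly_cong_mult poly_cong_refl two_cos_2_sq)
  also have "of_int (2 * \<eta>) * 2 = (of_int (4 * \<eta>) :: int poly)"
    by simp
  finally have "[4 * A = 4 * \<eta>] (mod int p)"
    by (rule cyclotomic16_cong_of_int)
  moreover have "coprime 4 (int p)"
    using coprime_power_left_iff[of 2 2 "int p"] assms(2) by simp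
  ultimately show ?thesis
    unfolding A_def using cong_mult_lcancel by blast
qed

lemma sum_binomial_4k_2k_cong:
  assumes "prime p" and "p = 2 * h + 1"
  shows "[2 ^ h * (\<Sum>k\<le>h div 2. int ((4 * k) choose (2 * k)) * 32 ^ (h div 2 - k))
      = 32 ^ (h div 2) * (\<Sum>k\<le>h div 2. int (h choose (2 * k)) * 2 ^ (h - k))] (mod int p)"
  unfolding sum_distrib_left
proof (rule cong_sum)
  fix k assume "k \<in> {..h div 2}"
  then have k: "k \<le> h div 2" by simp
  have "[int ((4 * k) choose (2 * k)) = 16 ^ k * int (h choose (2 * k))] (mod int p)"
    using central_binomial_cong[OF assms, of "2 * k"] k by (simp add: power_mult)
  then have "[2 ^ h * (int ((4 * k) choose (2 * k)) * 32 ^ (h div 2 - k))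
      = 2 ^ h * (16 ^ k * int (h choose (2 * k)) * 32 ^ (h div 2 - k))] (mod int p)"
    by (intro cong_mult cong_refl)
  also have "2 ^ h * (16 ^ k * int (h choose (2 * k)) * 32 ^ (h div 2 - k))
      = 32 ^ (h div 2) * (int (h choose (2 * k)) * 2 ^ (h - k))"
  proof -
    have "h + 4 * k + 5 * (h div 2 - k) = 5 * (h div 2) + (h - k)"
      using k by linarith
    then have "(2::int) ^ h * (2 ^ 4) ^ k * (2 ^ 5) ^ (h div 2 - k) = (2 ^ 5) ^ (h div 2) * 2 ^ (h - k)"
      by (simp only: power_mult[symmetric] power_add[symmetric])
    then show ?thesis
      by (simp add: algebra_simps)
  qed
  finally show "[2 ^ h * (int ((4 * k) choose (2 * k)) * 32 ^ (h div 2 - k))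
      = 32 ^ (h div 2) * (int (h choose (2 * k)) * 2 ^ (h - k))] (mod int p)" .
qed

lemma two_cos_frobenius_sum:
  assumes "r \<in> {1, 3, 5, 7}"
  shows "[two_cos 3 * two_cos r + two_cos 1 * two_cos (r * 3)
    = of_int (2 * (if r \<in> {1, 5} then 1 else - 1)) * two_cos 2] (mod P, cyclotomic16)"
proof -
  let ?c = "two_cos 1" and ?d = "two_cos 3" and ?s = "two_cos 2"
  note cd = two_cos_3_1_double[of P] and squares = two_cos_3_sq_minus_1_sq[of P]
  consider "r = 1" | "r = 3" | "r = 5" | "r = 7"
    using assms by auto
  then show ?thesis
  proof cases
    case 1
    then show ?thesis
      using cd by simp
  next
    case 2
    have "[?d * ?d + ?c * two_cos 9 = ?d * ?d + ?c * - ?c] (mod P, cyclotomic16)"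
      by (intro poly_cong_add poly_cong_mult poly_cong_refl two_cos_antipodal) (simp add: cong_def)
    also have "?d * ?d + ?c * - ?c = ?d * ?d - ?c * ?c"
      by simp
    also note squares
    finally show ?thesis
      using 2 by simp
  next
    case 3
    have "[?d * two_cos 5 + ?c * two_cos 15 = ?d * - ?d + ?c * ?c] (mod P, cyclotomic16)"
      by (intro poly_cong_add poly_cong_mult poly_cong_refl two_cos_antipodal two_cos_cong)
        (simp_all add: cong_def)
    also have "?d * - ?d + ?c * ?c = - (?d * ?d - ?c * ?c)"
      by simp
    also have "[\<dots> = - (- 2 * ?s)] (mod P, cyclotomic16)"
      by (rule poly_cong_minus[OF squares])
    finally show ?thesis
      using 3 by simp
  next
    case 4
    have "[?d * two_cos 7 + ?c * two_cos 21 = ?d * - ?c + ?c * - ?d] (mod P, cyclotomic16)"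
      by (intro poly_cong_add poly_cong_mult poly_cong_refl two_cos_antipodal) (simp_all add: cong_def)
    also have "?d * - ?c + ?c * - ?d = - (?d * ?c + ?c * ?d)"
      by simp
    also have "[\<dots> = - (2 * ?s)] (mod P, cyclotomic16)"
      by (rule poly_cong_minus[OF cd])
    finally show ?thesis
      using 4 by simp
  qed
qed

lemma two_cos_frobenius_sqrt2:
  assumes "r \<in> {1, 3, 5, 7}"
  shows "[two_cos (r * 2) = of_int (if r \<in> {1, 7} then 1 else - 1) * two_cos 2] (mod P, cyclotomic16)"
  using assms two_cos_antipodal[of 6 2 P] two_cos_antipodal[of 10 2 P] two_cos_cong[of 14 2 P]
  by (auto simp: cong_def)

lemma sum_binomial_4k_2k_sign_cong:
  assumes "prime p" and "odd p" and "r \<in> {1, 3, 5, 7}"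
    and "[p = r] (mod 16) \<or> [p + r = 0] (mod 16)"
  shows "[(\<Sum>k\<le>p div 4. int ((4 * k) choose (2 * k)) * 32 ^ (p div 4 - k))
      = (if r \<le> 3 then 1 else - 1) * 32 ^ (p div 4)] (mod int p)"
proof -
  obtain h where p: "p = 2 * h + 1"
    using assms(2) oddE by blast
  define m where "m = h div 2"
  define N where "N = (\<Sum>k\<le>m. int ((4 * k) choose (2 * k)) * 32 ^ (m - k))"
  define A where "A = (\<Sum>k\<le>m. int (h choose (2 * k)) * 2 ^ (h - k))"
  have "p div 4 = m"
    unfolding m_def p by linarith
  define \<eta> :: int where "\<eta> = (if r \<in> {1, 5} then 1 else - 1)"
  define \<chi> :: int where "\<chi> = (if r \<in> {1, 7} then 1 else - 1)"
  have sign: "\<eta> * \<chi> = (if r \<le> 3 then 1 else - 1)" "\<chi> * \<chi> = 1"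
    using assms(3) by (auto simp: \<eta>_def \<chi>_def)
  note \<eta> = two_cos_frobenius_sum[OF assms(3), folded \<eta>_def]
  note \<chi> = two_cos_frobenius_sqrt2[OF assms(3), folded \<chi>_def]
  note two_cos_p = two_cos_mult_cong[OF assms(4)]
  have "[two_cos 3 * two_cos p + two_cos 1 * two_cos (p * 3) = of_int (2 * \<eta>) * two_cos 2]
      (mod int p, cyclotomic16)"
    using two_cos_p[where n = 1] two_cos_p[where n = 3]
    by (intro poly_cong_trans[OF _ \<eta>] poly_cong_add poly_cong_mult poly_cong_refl) simp_all
  then have A: "[A = \<eta>] (mod int p)"
    unfolding A_def m_def by (rule even_binomial_sum_cong[OF assms(1) p])
  have two: "[2 ^ h = \<chi>] (mod int p)"
    by (rule two_pow_half_cong[OF assms(1) p poly_cong_trans[OF two_cos_p \<chi>]])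
  have "N = \<chi> * (\<chi> * N)"
    using sign(2) by (simp add: mult.assoc[symmetric])
  also have "[\<chi> * (\<chi> * N) = \<chi> * (2 ^ h * N)] (mod int p)"
    by (rule cong_mult[OF cong_refl cong_mult[OF cong_sym[OF two] cong_refl]])
  also have "[\<chi> * (2 ^ h * N) = \<chi> * (32 ^ m * \<eta>)] (mod int p)"
    using sum_binomial_4k_2k_cong[OF assms(1) p] unfolding N_def A_def[symmetric] m_def[symmetric]
    by (rule cong_mult[OF cong_refl cong_trans[OF _ cong_mult[OF cong_refl A]]])
  also have "\<chi> * (32 ^ m * \<eta>) = (if r \<le> 3 then 1 else - 1) * 32 ^ m"
    using sign(1) by (simp add: algebra_simps)
  finally show ?thesis
    unfolding N_def \<open>p div 4 = m\<close> .
qed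

lemma sum_binomial_4k_2k_quotient:
  "(\<Sum>k = 0..m. of_nat ((4 * k) choose (2 * k)) / 32 ^ k :: rat)
    = of_int (\<Sum>k\<le>m. int ((4 * k) choose (2 * k)) * 32 ^ (m - k)) / of_int (32 ^ m)"
proof -
  have "of_int (\<Sum>k\<le>m. int ((4 * k) choose (2 * k)) * 32 ^ (m - k)) / of_int (32 ^ m)
      = (\<Sum>k\<le>m. of_nat ((4 * k) choose (2 * k)) * 32 ^ (m - k) / 32 ^ m :: rat)"
    by (simp add: of_int_sum sum_divide_distrib)
  also have "\<dots> = (\<Sum>k\<le>m. of_nat ((4 * k) choose (2 * k)) / 32 ^ k)"
  proof (rule sum.cong[OF refl])
    fix k assume "k \<in> {..m}"
    then have "(32::rat) ^ m = 32 ^ (m - k) * 32 ^ k"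
      by (simp flip: power_add)
    then show "of_nat ((4 * k) choose (2 * k)) * 32 ^ (m - k) / 32 ^ m
        = (of_nat ((4 * k) choose (2 * k)) / 32 ^ k :: rat)"
      by simp
  qed
  finally show ?thesis
    by (simp add: atLeast0AtMost)
qed

lemma sum_binomial_4k_2k_rat_cong:
  assumes "prime p" and "odd p" and "r \<in> {1, 3, 5, 7}"
    and "[p = r] (mod 16) \<or> [p + r = 0] (mod 16)"
  shows "rat_cong (\<Sum>k = 0..p div 4. of_nat ((4 * k) choose (2 * k)) / 32 ^ k)
    (if r \<le> 3 then 1 else - 1) (int p)"
proof -
  have "\<not> int p dvd 32 ^ (p div 4)"
    using odd_prime_not_dvd_power_2[OF assms(1,2), of "5 * (p div 4)"] by (simp add: power_mult)
  with sum_binomial_4k_2k_sign_cong[OF assms]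
  have "rat_cong (of_int (\<Sum>k\<le>p div 4. int ((4 * k) choose (2 * k)) * 32 ^ (p div 4 - k))
      / of_int (32 ^ (p div 4))) (of_int (if r \<le> 3 then 1 else - 1)) (int p)"
    by (rule rat_cong_of_cong)
  then show ?thesis
    unfolding sum_binomial_4k_2k_quotient by (cases "r \<le> 3") simp_all
qed

theorem corollary2p3:
  fixes p :: nat
  assumes "prime p" and "odd p"
  shows "(p mod 16 \<in> {1, 15, 3, 13} \<longrightarrow>
            rat_cong (\<Sum>k = 0..p div 4. of_nat ((4*k) choose (2*k)) / 32 ^ k) 1 (int p))
       \<and> (p mod 16 \<in> {5, 11, 7, 9} \<longrightarrow>
            rat_cong (\<Sum>k = 0..p div 4. of_nat ((4*k) choose (2*k)) / 32 ^ k) (-1) (int p))"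
proof -
  define r where "r = min (p mod 16) (16 - p mod 16)"
  have "[p = r] (mod 16) \<or> [p + r = 0] (mod 16)"
    unfolding r_def by (rule cong_min_mod_or_neg) simp
  then show ?thesis
    using sum_binomial_4k_2k_rat_cong[OF assms, of r] unfolding r_def by auto
qed

end
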